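(* In $NOM$, for every finite sequence $\Gamma$ and formulas $\phi,\psi$, the following rules are derivable: from $\Gamma\vdash\phi$ infer $\Gamma\vdash\neg\neg\phi$; from $\Gamma\vdash\neg\neg\phi$ infer $\Gamma\vdash\phi$; from $\Gamma,\phi\vdash\psi$ and $\Gamma,\phi\vdash\neg\psi$ infer $\Gamma\vdash\neg\phi$; from $\Gamma,\neg\phi\vdash\psi$ and $\Gamma,\neg\phi\vdash\neg\psi$ infer $\Gamma\vdash\phi$; from $\Gamma,\phi\vdash\neg\phi$ infer $\Gamma\vdash\neg\phi$; from $\Gamma,\neg\phi\vdash\phi$ infer $\Gamma\vdash\phi$.
   Context: The propositional deductive system $NOM$: formulas are built from propositional letters using $\wedge$, $\rightarrow$, $\neg$. Sequents are $\phi_1,\ldots,\phi_n\vdash\psi$ ($n\ge0$) with antecedent a finite ordered sequence. With $\Gamma$ a finite possibly empty sequence of formulas and $\phi,\psi,\chi$ formulas, the rules of $NOM$ are: (assumption) $\Gamma,\phi\vdash\phi$; (cut) $\Gamma\vdash\phi$, $\Gamma,\phi\vdash\psi$ $\Rightarrow$ $\Gamma\vdash\psi$; (paste) $\Gamma\vdash\phi$, $\Gamma\vdash\psi$ $\Rightarrow$ $\Gamma,\phi\vdash\psi$; (compatible exchange) $\Gamma,\phi,\psi\vdash\phi$, $\Gamma,\phi,\psi\vdash\chi$, $\Gamma,\psi,\phi\vdash\psi$ $\Rightarrow$ $\Gamma,\psi,\phi\vdash\chi$; ($\wedge$-intro) $\Gamma\vdash\phi$, $\Gamma\vdash\psi$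 $\Rightarrow$ $\Gamma\vdash\phi\wedge\psi$; ($\wedge$-elim) $\Gamma\vdash\phi\wedge\psi$ $\Rightarrow$ $\Gamma\vdash\phi$ and $\Rightarrow$ $\Gamma\vdash\psi$; ($\rightarrow$-intro) $\Gamma,\phi\vdash\psi$ $\Rightarrow$ $\Gamma\vdash\phi\rightarrow\psi$; ($\rightarrow$-elim) $\Gamma\vdash\phi\rightarrow\psi$ $\Rightarrow$ $\Gamma,\phi\vdash\psi$; (excluded middle) $\Gamma,\phi\vdash\psi$, $\Gamma,\neg\phi\vdash\psi$ $\Rightarrow$ $\Gamma\vdash\psi$; (explosion) $\Gamma\vdash\neg\phi$ $\Rightarrow$ $\Gamma,\phi\vdash\psi$. A rule schema is derivable if in every instance its conclusion can be derived from its premises using these rules. *)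

theory Defs
  imports Main
begin

datatype form = Var nat | Conj form form (infixr "\<^bold>\<and>" 35)
  | Imp form form (infixr "\<^bold>\<rightarrow>" 25) | Neg form ("\<^bold>\<not> _" [40] 40)

text \<open>A sequent Gamma |- phi is a pair (Gamma, phi) with Gamma a list (ordered sequence);
  "Gamma, phi" is Gamma @ [phi].  derives H Gamma phi means: the sequent is derivable in NOM
  using the set H of sequents as additional hypotheses (premises of a rule).\<close>

inductive derives :: "(form list \<times> form) set \<Rightarrow> form list \<Rightarrow> form \<Rightarrow> bool" for H where
  hyp: "(G, p) \<in> H \<Longrightarrow> derives H G p"
| assumption: "derives H (G @ [p]) p"
| cut: "derives H G p \<Longrightarrow> derives H (G @ [p]) q \<Longrightarrow> derives H G q"
| paste: "derives H G p \<Longrightarrow> derives H G q \<Longrightarrow> derives H (G @ [p]) q"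
| cexch: "derives H (G @ [p, q]) p \<Longrightarrow> derives H (G @ [p, q]) r \<Longrightarrow> derives H (G @ [q, p]) q
          \<Longrightarrow> derives H (G @ [q, p]) r"
| conjI: "derives H G p \<Longrightarrow> derives H G q \<Longrightarrow> derives H G (Conj p q)"
| conjE1: "derives H G (Conj p q) \<Longrightarrow> derives H G p"
| conjE2: "derives H G (Conj p q) \<Longrightarrow> derives H G q"
| impI: "derives H (G @ [p]) q \<Longrightarrow> derives H G (Imp p q)"
| impE: "derives H G (Imp p q) \<Longrightarrow> derives H (G @ [p]) q"
| em: "derives H (G @ [p]) q \<Longrightarrow> derives H (G @ [Neg p]) q \<Longrightarrow> derives H G q"
| explosion: "derives H G (Neg p) \<Longrightarrow> derives H (G @ [p]) q"

definition derivable_rule :: "(form list \<times> form) list \<Rightarrow> form list \<times> form \<Rightarrow> bool" where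
  "derivable_rule Ps C \<longleftrightarrow> derives (set Ps) (fst C) (snd C)"

end

theory Submission
  imports Defs
begin

lemma derives_mp: "derives H G (p \<^bold>\<rightarrow> q) \<Longrightarrow> derives H G p \<Longrightarrow> derives H G q"
  by (rule derives.cut, assumption, rule derives.impE)

lemma derives_contradiction: "derives H G q \<Longrightarrow> derives H G (\<^bold>\<not> q) \<Longrightarrow> derives H G r"
  by (rule derives.cut, assumption, rule derives.explosion)

lemma derives_notnotD: "derives H G (\<^bold>\<not> \<^bold>\<not> p) \<Longrightarrow> derives H G p"
  by (rule derives.em[where p = p], rule derives.assumption, rule derives.explosion)

text \<open>NOM has no weakening, so \<open>G \<turnstile> p\<close> cannot simply be carried into the context \<open>G, \<not> p\<close>;
  double negation is therefore introduced through the context-free theorem \<open>p \<rightarrow> \<not>\<not> p\<close>.\<close>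

lemma derives_imp_notnot: "derives H G (p \<^bold>\<rightarrow> \<^bold>\<not> \<^bold>\<not> p)"
proof (rule derives.em[where p = "\<^bold>\<not> p"])
  show "derives H (G @ [\<^bold>\<not> p]) (p \<^bold>\<rightarrow> \<^bold>\<not> \<^bold>\<not> p)"
    by (rule derives.impI, rule derives.explosion, rule derives.assumption)
next
  have "derives H (G @ [\<^bold>\<not> \<^bold>\<not> p]) p"
    by (rule derives_notnotD, rule derives.assumption)
  then have "derives H (G @ [\<^bold>\<not> \<^bold>\<not> p, p]) (\<^bold>\<not> \<^bold>\<not> p)"
    using derives.paste[of H "G @ [\<^bold>\<not> \<^bold>\<not> p]" p] derives.assumption by simp
  then show "derives H (G @ [\<^bold>\<not> \<^bold>\<not> p]) (p \<^bold>\<rightarrow> \<^bold>\<not> \<^bold>\<not> p)"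
    using derives.impI[of H "G @ [\<^bold>\<not> \<^bold>\<not> p]"] by simp
qed

lemma derives_notnotI: "derives H G p \<Longrightarrow> derives H G (\<^bold>\<not> \<^bold>\<not> p)"
  by (rule derives_mp[OF derives_imp_notnot])

lemma derives_consequentia_mirabilis: "derives H (G @ [\<^bold>\<not> p]) p \<Longrightarrow> derives H G p"
  by (rule derives.em[where p = p], rule derives.assumption)

lemma derives_neg_consequentia_mirabilis: "derives H (G @ [p]) (\<^bold>\<not> p) \<Longrightarrow> derives H G (\<^bold>\<not> p)"
  by (rule derives.em[where p = p], assumption, rule derives.assumption)

lemma derives_notI:
  "derives H (G @ [p]) q \<Longrightarrow> derives H (G @ [p]) (\<^bold>\<not> q) \<Longrightarrow> derives H G (\<^bold>\<not> p)"
  by (rule derives_neg_consequentia_mirabilis, rule derives_contradiction)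

lemma derives_ccontr:
  "derives H (G @ [\<^bold>\<not> p]) q \<Longrightarrow> derives H (G @ [\<^bold>\<not> p]) (\<^bold>\<not> q) \<Longrightarrow> derives H G p"
  by (rule derives_consequentia_mirabilis, rule derives_contradiction)

theorem proposition2p4:
  fixes G :: "form list" and p q :: form
  shows "derivable_rule [(G, p)] (G, Neg (Neg p)) \<and>
    derivable_rule [(G, Neg (Neg p))] (G, p) \<and>
    derivable_rule [(G @ [p], q), (G @ [p], Neg q)] (G, Neg p) \<and>
    derivable_rule [(G @ [Neg p], q), (G @ [Neg p], Neg q)] (G, p) \<and>
    derivable_rule [(G @ [p], Neg p)] (G, Neg p) \<and>
    derivable_rule [(G @ [Neg p], p)] (G, p)"
  unfolding derivable_rule_def
  by (auto intro: derives.hyp derives_notnotI derives_notnotD derives_notI derives_ccontr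
      derives_neg_consequentia_mirabilis derives_consequentia_mirabilis)

end
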